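(* Let $\ell$ be a finite linear order with $|\ell|\ge2$, $\mathscr T$ a Schröder tree on $\ell$ enriched with connected graphs, with root $r$ and $g=\bigvee\mathscr T$. Suppose that for every internal vertex $w\neq r$ of $\mathscr T$ the graph $g_{\ell_w}$ is $r_w$-regular. Then $$\phi_g(x,t)=\Big(\prod_{w\in\mathrm{Iv}(\mathscr T),\,w\neq r}\frac{\phi_{(a_w,g_w)}(x+tN_{rw},t)}{x-r_w+t(r_w+N_{rw})}\Big)\,\phi_{(a_r,g_r)}(x,t).$$
   Context: All graphs finite and simple. $\phi_g(x,t)=\det\big(xI-(A(g)-tD(g))\big)$ with $A$ adjacency and $D$ diagonal degree matrix. Generalized composition: for a segmented partition $\pi=(\ell_1,\dots,\ell_k)$ of $\ell$ (nonempty consecutive segments whose concatenation is $\ell$), graphs $g_{\ell_j}$ on $\ell_j$ and a graph $h$ on $\pi$, $\bigvee_h(g_{\ell_1},\dots,g_{\ell_k})$ has vertex set $\ell$ and edges those of the $g_{\ell_j}$ plus all $\{x,y\}$, $x\in\ell_i,y\in\ell_j$, $\{\ell_i,\ell_j\}\in E(h)$. Graph-enriched Schröder tree on $\ell$: rooted plane tree with leaves the elements of $\ell$ left to right, each internal vertex having at least two children, with a graph $g_v$ on $\pi_v=(\ell_{v_1},\dots,\ell_{v_k})$ for each internal $v$ (children $v_1,\dots,v_k$ left to right, $\ell_u$ the leaves below $u$); enriched with connected graphs means every $g_v$ is connected. $\bigvee$ of a leaf is the one-vertex graph and $\bigvee\mathscr T=\bigvee_{g_r}(\bigvee\mathscr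 T_{r_1},\dots,\bigvee\mathscr T_{r_k})$ ($\mathscr T_u$ subtree at $u$); $g_{\ell_u}=\bigvee\mathscr T_u$; $a_v=(g_{\ell_{v_1}},\dots,g_{\ell_{v_k}})$. For internal $v$, with $n_i=|\ell_{v_i}|$, $\rho_i=\mathrm{reg}(g_{\ell_{v_i}})$ and $N_i=\sum_{s:\{\ell_{v_s},\ell_{v_i}\}\in E(g_v)}n_s$: $A(a_v,g_v)$ is the $k\times k$ matrix with diagonal $\rho_i$ and $(i,j)$ entry ($i\neq j$) $\sqrt{n_in_j}$ if $\{\ell_{v_i},\ell_{v_j}\}\in E(g_v)$, else $0$; $D(a_v,g_v)=\mathrm{diag}(\rho_i+N_i)$; $\phi_{(a_v,g_v)}(x,t)=\det\big(xI_k-(A(a_v,g_v)-tD(a_v,g_v))\big)$. For non-root internal $w$ with parent $u$, $N_w=\sum_{x:\{\ell_x,\ell_w\}\in E(g_u)}|\ell_x|$, and $N_{rw}=N_{w_1}+\cdots+N_{w_m}$ along the path $r=w_0,w_1,\dots,w_m=w$. *)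

theory Defs
  imports Complex_Main "Jordan_Normal_Form.Determinant"
begin

definition simple_graph :: "'v set \<Rightarrow> 'v set set \<Rightarrow> bool" where
  "simple_graph V E \<longleftrightarrow> E \<subseteq> {e. \<exists>x y. x \<in> V \<and> y \<in> V \<and> x \<noteq> y \<and> e = {x, y}}"

definition connected_graph :: "'v set \<Rightarrow> 'v set set \<Rightarrow> bool" where
  "connected_graph V E \<longleftrightarrow> V \<noteq> {} \<and>
     (\<forall>x\<in>V. \<forall>y\<in>V. (x, y) \<in> {(u, w). {u, w} \<in> E}\<^sup>*)"

definition deg :: "'v set set \<Rightarrow> 'v \<Rightarrow> nat" where
  "deg E v = card {u. {u, v} \<in> E}"

definition regular :: "'v set \<Rightarrow> 'v set set \<Rightarrow> nat \<Rightarrow> bool" where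
  "regular V E r \<longleftrightarrow> (\<forall>v\<in>V. deg E v = r)"

definition reg :: "'v set \<Rightarrow> 'v set set \<Rightarrow> nat" where
  "reg V E = (THE r. regular V E r)"

definition phi_graph :: "'v::linorder set \<Rightarrow> 'v set set \<Rightarrow> real \<Rightarrow> real \<Rightarrow> real" where
  "phi_graph V E x t =
    (let vs = sorted_list_of_set V; n = length vs;
         A = mat n n (\<lambda>(i, j). if {vs ! i, vs ! j} \<in> E then 1 else 0);
         D = mat n n (\<lambda>(i, j). if i = j then real (deg E (vs ! i)) else 0)
     in det (x \<cdot>\<^sub>m 1\<^sub>m n - (A - t \<cdot>\<^sub>m D)))"

text \<open>A leaf carries its element of the
  linear order; an internal vertex carries a graph on the positions 0..k-1 of its
  k children (position i standing for the segment of leaves below the i-th child).\<close>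

datatype 'a stree = Leaf 'a | Node "nat set set" "'a stree list"

fun leaves :: "'a stree \<Rightarrow> 'a list" where
  "leaves (Leaf a) = [a]"
| "leaves (Node E ts) = concat (map leaves ts)"

fun wf_conn :: "'a stree \<Rightarrow> bool" where
  "wf_conn (Leaf a) = True"
| "wf_conn (Node E ts) = (2 \<le> length ts \<and> simple_graph {..<length ts} E \<and>
       connected_graph {..<length ts} E \<and> list_all wf_conn ts)"

fun compose :: "'a stree \<Rightarrow> 'a set set" where
  "compose (Leaf a) = {}"
| "compose (Node E ts) = \<Union> (set (map compose ts)) \<union>
     {{x, y} | x y i j. {i, j} \<in> E \<and> i < length ts \<and> j < length ts \<and>
         x \<in> set (leaves (ts ! i)) \<and> y \<in> set (leaves (ts ! j))}"

fun subt :: "'a stree \<Rightarrow> nat list \<Rightarrow> 'a stree option" where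
  "subt t [] = Some t"
| "subt t (i # p) = (case t of Leaf a \<Rightarrow> None
     | Node E ts \<Rightarrow> if i < length ts then subt (ts ! i) p else None)"

definition internal :: "'a stree \<Rightarrow> nat list set" where
  "internal T = {p. \<exists>E ts. subt T p = Some (Node E ts)}"

text \<open>reg of the graph g_{l_u} = composition of the subtree at u.\<close>
definition treg :: "'a stree \<Rightarrow> nat" where
  "treg t = reg (set (leaves t)) (compose t)"

definition Nchild :: "nat set set \<Rightarrow> 'a stree list \<Rightarrow> nat \<Rightarrow> nat" where
  "Nchild E ts i = (\<Sum>j\<in>{j. j < length ts \<and> {j, i} \<in> E}. length (leaves (ts ! j)))"

definition node_A :: "nat set set \<Rightarrow> 'a stree list \<Rightarrow> real mat" where
  "node_A E ts = mat (length ts) (length ts) (\<lambda>(i, j).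
     if i = j then real (treg (ts ! i))
     else if {i, j} \<in> E then sqrt (real (length (leaves (ts ! i))) * real (length (leaves (ts ! j))))
     else 0)"

definition node_D :: "nat set set \<Rightarrow> 'a stree list \<Rightarrow> real mat" where
  "node_D E ts = mat (length ts) (length ts) (\<lambda>(i, j).
     if i = j then real (treg (ts ! i) + Nchild E ts i) else 0)"

definition phi_node :: "nat set set \<Rightarrow> 'a stree list \<Rightarrow> real \<Rightarrow> real \<Rightarrow> real" where
  "phi_node E ts x t =
     det (x \<cdot>\<^sub>m 1\<^sub>m (length ts) - (node_A E ts - t \<cdot>\<^sub>m node_D E ts))"

definition phi_at :: "'a stree \<Rightarrow> nat list \<Rightarrow> real \<Rightarrow> real \<Rightarrow> real" where
  "phi_at T p x t = (case subt T p of Some (Node E ts) \<Rightarrow> phi_node E ts x t | _ \<Rightarrow> 0)"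

definition Nw :: "'a stree \<Rightarrow> nat list \<Rightarrow> nat" where
  "Nw T p = (case subt T (butlast p) of Some (Node E ts) \<Rightarrow> Nchild E ts (last p) | _ \<Rightarrow> 0)"

definition Nrw :: "'a stree \<Rightarrow> nat list \<Rightarrow> nat" where
  "Nrw T p = (\<Sum>k\<in>{1..length p}. Nw T (take k p))"

definition rw :: "'a stree \<Rightarrow> nat list \<Rightarrow> nat" where
  "rw T p = (case subt T p of Some u \<Rightarrow> treg u | None \<Rightarrow> 0)"

end

(* Write M for the matrix xI - (A - tD) of g, indexed by the leaves. The leaves below the
   children v_1, ..., v_k of the root partition M into blocks. An off-diagonal block is
   constant (-1 if {v_i, v_j} is an edge of g_r, 0 otherwise), and since g_(l_(v_i)) is
   regular, all rows of the diagonal block M_ii have the same sum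
   s_i = x + t N_i - r_i + t r_i. Collapsing the blocks one at a time by elementary row and
   column operations gives

     det M = (prod_i det M_ii / s_i) * det Q,   Q_ii = s_i,  Q_ij = -[v_i v_j in g_r] n_j,

   and conjugating Q by diag(sqrt n_i) yields the matrix defining phi_(a_r, g_r). The block
   M_ii is the matrix of g_(l_(v_i)) with x replaced by x + t N_i, so induction over the tree
   gives the product formula, the shifts adding up to N_rw along the path to w. *)

theory Submission
  imports Defs
begin

section \<open>Determinants of matrices with an equitable block partition\<close>

lemma det_unit_upper_triangular:
  fixes A :: "'a::comm_ring_1 mat"
  assumes A: "A \<in> carrier_mat n n"
    and diag: "\<And>i. i < n \<Longrightarrow> A $$ (i, i) = 1"
    and lower: "\<And>i j. j < i \<Longrightarrow> i < n \<Longrightarrow> A $$ (i, j) = 0"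
  shows "det A = 1"
proof -
  have "diag_mat A = replicate n 1"
    using A diag by (intro nth_equalityI) (auto simp: diag_mat_def)
  moreover have "upper_triangular A"
    using A lower by (auto simp: upper_triangular_def)
  ultimately show ?thesis
    using det_upper_triangular[OF _ A] by simp
qed

lemma det_permute_rows_cols:
  fixes A :: "'a::comm_ring_1 mat"
  assumes A: "A \<in> carrier_mat n n" and p: "p permutes {0..<n}"
  shows "det (mat n n (\<lambda>(i, j). A $$ (p i, p j))) = det A"
proof -
  define B where "B = mat n n (\<lambda>(i, j). A $$ (p i, j))"
  have B: "B \<in> carrier_mat n n" by (simp add: B_def)
  have "mat n n (\<lambda>(i, j). A $$ (p i, p j)) = transpose_mat (mat n n (\<lambda>(i, j). transpose_mat B $$ (p i, j)))"
    using p by (auto simp: B_def permutes_in_image intro!: eq_matI)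
  hence "det (mat n n (\<lambda>(i, j). A $$ (p i, p j))) = det (mat n n (\<lambda>(i, j). transpose_mat B $$ (p i, j)))"
    by (simp add: det_transpose[OF mat_carrier])
  also have "\<dots> = signof p * det (transpose_mat B)"
    using B p by (simp add: det_permute_rows)
  also have "det (transpose_mat B) = det B"
    by (rule det_transpose[OF B])
  also have "det B = signof p * det A"
    unfolding B_def by (rule det_permute_rows[OF A p])
  also have "signof p * (signof p * det A) = det A"
    by (cases p rule: sign_cases) auto
  finally show ?thesis .
qed

lemma det_diagonal_similarity:
  fixes A :: "'a::field mat"
  assumes A: "A \<in> carrier_mat k k" and a: "\<And>i. i < k \<Longrightarrow> a i \<noteq> 0"
  shows "det (mat k k (\<lambda>(i, j). a i * A $$ (i, j) / a j)) = det A"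
proof -
  let ?D = "mat_diag k a" and ?D' = "mat_diag k (\<lambda>j. 1 / a j)"
  have DA: "?D * A \<in> carrier_mat k k" using mult_carrier_mat[OF mat_diag_dim A] .
  have "det ?D * det ?D' = det (?D * ?D')"
    by (rule det_mult[OF mat_diag_dim mat_diag_dim, symmetric])
  also have "?D * ?D' = 1\<^sub>m k"
    unfolding mat_diag_diag using a by (auto simp: mat_diag_def intro!: eq_matI)
  finally have inverse: "det ?D * det ?D' = 1" by simp
  have "det (mat k k (\<lambda>(i, j). a i * A $$ (i, j) / a j)) = det (?D * A * ?D')"
    using A by (auto simp: mat_diag_mult_left[OF A] mat_diag_mult_right[of _ k k]
        intro!: arg_cong[where f = det] eq_matI)
  also have "\<dots> = det ?D * det A * det ?D'"
    by (simp add: det_mult[OF DA mat_diag_dim] det_mult[OF mat_diag_dim A])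
  also have "\<dots> = det A"
    using inverse by (simp add: algebra_simps)
  finally show ?thesis .
qed

lemma mult_mat_sum_leading_cols:
  fixes X :: "'a::comm_ring_1 mat"
  assumes X: "X \<in> carrier_mat n n" and k: "k < n"
  shows "X * mat n n (\<lambda>(v, c). if c = k then (if v \<le> k then 1 else 0) else if v = c then 1 else 0) =
    mat n n (\<lambda>(u, c). if c = k then (\<Sum>v\<le>k. X $$ (u, v)) else X $$ (u, c))"
    (is "X * ?P = ?Y")
proof (rule eq_matI)
  fix u c assume "u < dim_row ?Y" "c < dim_col ?Y"
  hence u: "u < n" and c: "c < n" by auto
  have "(X * ?P) $$ (u, c) = (\<Sum>v<n. X $$ (u, v) * ?P $$ (v, c))"
    using X u c by (simp add: scalar_prod_def atLeast0LessThan)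
  also have "\<dots> = ?Y $$ (u, c)"
  proof (cases "c = k")
    case True
    have "(\<Sum>v<n. X $$ (u, v) * ?P $$ (v, c)) = (\<Sum>v<n. if v \<in> {..k} then X $$ (u, v) else 0)"
      using True k by (intro sum.cong) auto
    also have "\<dots> = (\<Sum>v\<in>{..<n} \<inter> {..k}. X $$ (u, v))"
      by (simp add: sum.inter_restrict)
    also have "{..<n} \<inter> {..k} = {..k}" using k by auto
    finally show ?thesis using True u c by simp
  qed (use u c in \<open>simp add: if_distrib[of "\<lambda>x. _ * x"] cong: if_cong\<close>)
  finally show "(X * ?P) $$ (u, c) = ?Y $$ (u, c)" .
qed (use X in auto)

lemma mult_mat_subtract_row:
  fixes Y :: "'a::comm_ring_1 mat"
  assumes Y: "Y \<in> carrier_mat n n" and k: "k < n"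
  shows "mat n n (\<lambda>(r, u). if r = u then 1 else if r < k \<and> u = k then -1 else 0) * Y =
    mat n n (\<lambda>(r, c). if r < k then Y $$ (r, c) - Y $$ (k, c) else Y $$ (r, c))"
    (is "?L * Y = ?Z")
proof (rule eq_matI)
  fix r c assume "r < dim_row ?Z" "c < dim_col ?Z"
  hence r: "r < n" and c: "c < n" by auto
  have "(?L * Y) $$ (r, c) = (\<Sum>u<n. ?L $$ (r, u) * Y $$ (u, c))"
    using Y r c by (simp add: scalar_prod_def atLeast0LessThan)
  also have "\<dots> = (\<Sum>u<n. (if u = r then Y $$ (r, c) else 0) -
      (if r < k \<and> u = k then Y $$ (k, c) else 0))"
    using r by (intro sum.cong) auto
  also have "\<dots> = ?Z $$ (r, c)"
    using r c k by (simp add: sum_subtractf)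
  finally show "(?L * Y) $$ (r, c) = ?Z $$ (r, c)" .
qed (use Y in auto)

lemma det_collapse_leading_rows:
  fixes X :: "'a::idom mat"
  assumes X: "X \<in> carrier_mat n n" and k: "k < n"
    and row_sums: "\<And>r. r < k \<Longrightarrow> (\<Sum>v\<le>k. X $$ (r, v)) = (\<Sum>v\<le>k. X $$ (k, v))"
    and rows_right: "\<And>r c. r < k \<Longrightarrow> k < c \<Longrightarrow> c < n \<Longrightarrow> X $$ (r, c) = X $$ (k, c)"
  shows "det X = det (mat k k (\<lambda>(r, c). X $$ (r, c) - X $$ (k, c))) *
    det (mat (n - k) (n - k) (\<lambda>(r, c).
      if c = 0 then (\<Sum>v\<le>k. X $$ (r + k, v)) else X $$ (r + k, c + k)))"
    (is "_ = det ?R * det ?Q")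
proof -
  \<comment> \<open>\<open>P\<close> adds the columns \<open>0..<k\<close> to column \<open>k\<close>, then \<open>L\<close> subtracts row \<open>k\<close> from the
    rows \<open>0..<k\<close>; by the hypotheses this clears the upper right block.\<close>
  define P :: "'a mat" where
    "P = mat n n (\<lambda>(v, c). if c = k then (if v \<le> k then 1 else 0) else if v = c then 1 else 0)"
  define L :: "'a mat" where
    "L = mat n n (\<lambda>(r, u). if r = u then 1 else if r < k \<and> u = k then -1 else 0)"
  define Y where "Y = mat n n (\<lambda>(u, c). if c = k then (\<Sum>v\<le>k. X $$ (u, v)) else X $$ (u, c))"
  define W where "W = mat (n - k) k (\<lambda>(r, c). X $$ (r + k, c))"
  have P: "P \<in> carrier_mat n n" and L: "L \<in> carrier_mat n n" and Y: "Y \<in> carrier_mat n n"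
    by (simp_all add: P_def L_def Y_def)
  have "det P = 1" and "det L = 1"
    by (auto intro!: det_unit_upper_triangular simp: P_def L_def)
  have XP: "X * P = Y"
    unfolding P_def Y_def by (rule mult_mat_sum_leading_cols[OF X k])
  have LY: "L * Y = four_block_mat ?R (0\<^sub>m k (n - k)) W ?Q"
  proof -
    have "L * Y = mat n n (\<lambda>(r, c). if r < k then Y $$ (r, c) - Y $$ (k, c) else Y $$ (r, c))"
      unfolding L_def by (rule mult_mat_subtract_row[OF Y k])
    also have "\<dots> = four_block_mat ?R (0\<^sub>m k (n - k)) W ?Q"
    proof (rule eq_matI)
      fix r c assume "r < dim_row (four_block_mat ?R (0\<^sub>m k (n - k)) W ?Q)"
        "c < dim_col (four_block_mat ?R (0\<^sub>m k (n - k)) W ?Q)"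
      hence r: "r < n" and c: "c < n" using k by auto
      show "mat n n (\<lambda>(r, c). if r < k then Y $$ (r, c) - Y $$ (k, c) else Y $$ (r, c)) $$ (r, c) =
          four_block_mat ?R (0\<^sub>m k (n - k)) W ?Q $$ (r, c)"
        using r c k row_sums[of r] rows_right[of r c] by (auto simp: Y_def W_def)
    qed (use k in auto)
    finally show ?thesis .
  qed
  have "det X = det L * (det X * det P)"
    using \<open>det P = 1\<close> \<open>det L = 1\<close> by simp
  also have "\<dots> = det (L * Y)"
    using X P L by (simp add: det_mult[of _ n] XP[symmetric])
  also have "\<dots> = det ?R * det ?Q"
    unfolding LY by (rule det_four_block_mat_upper_right_zero) (auto simp: W_def)
  finally show ?thesis .
qed

definition mat_on :: "'p list \<Rightarrow> ('p \<Rightarrow> 'p \<Rightarrow> 'a) \<Rightarrow> 'a mat" where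
  "mat_on ps f = mat (length ps) (length ps) (\<lambda>(i, j). f (ps ! i) (ps ! j))"

lemma mat_on_carrier [simp]: "mat_on ps f \<in> carrier_mat (length ps) (length ps)"
  by (simp add: mat_on_def)

lemma mat_on_cong:
  "(\<And>u v. u \<in> set ps \<Longrightarrow> v \<in> set ps \<Longrightarrow> f u v = g u v) \<Longrightarrow> mat_on ps f = mat_on ps g"
  by (auto simp: mat_on_def intro!: eq_matI)

lemma mat_on_map: "mat_on (map h ps) f = mat_on ps (\<lambda>u v. f (h u) (h v))"
  by (auto simp: mat_on_def intro!: eq_matI)

lemma det_mat_on_mset_eq:
  fixes f :: "'p \<Rightarrow> 'p \<Rightarrow> 'a::comm_ring_1"
  assumes "mset xs = mset ys"
  shows "det (mat_on xs f) = det (mat_on ys f)"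
proof -
  obtain p where p: "p permutes {..<length ys}" "permute_list p ys = xs"
    using mset_eq_permutation[OF assms] by blast
  have len: "length xs = length ys" using assms by (metis size_mset)
  have p': "p permutes {0..<length ys}" using p(1) by (simp add: atLeast0LessThan)
  have "mat_on xs f = mat (length ys) (length ys) (\<lambda>(i, j). mat_on ys f $$ (p i, p j))"
    using p' p(2) by (auto simp: mat_on_def len permute_list_def permutes_in_image intro!: eq_matI)
  thus ?thesis using det_permute_rows_cols[OF mat_on_carrier p'] by simp
qed

lemma det_mat_on_collapse_block:
  fixes f :: "'p \<Rightarrow> 'p \<Rightarrow> 'a::idom"
  assumes "us \<noteq> []"
    and block_rows: "\<And>u. u \<in> set us \<Longrightarrow> sum_list (map (f u) us) = f z z"
    and rows_right: "\<And>u x. u \<in> set us \<Longrightarrow> x \<in> set rest \<Longrightarrow> f u x = f z x"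
    and cols_below: "\<And>x. x \<in> set rest \<Longrightarrow> sum_list (map (f x) us) = f x z"
  shows "det (mat_on (us @ rest) f) =
    det (mat_on (butlast us) (\<lambda>u v. f u v - f (last us) v)) * det (mat_on (z # rest) f)"
proof -
  define k where "k = length us - 1"
  define n where "n = length us + length rest"
  define X where "X = mat_on (us @ rest) f"
  have len: "length us = Suc k" and last: "last us = us ! k"
    using assms(1) by (simp_all add: k_def last_conv_nth)
  have X: "X \<in> carrier_mat n n" and k: "k < n"
    using mat_on_carrier[of "us @ rest" f] len by (simp_all add: X_def n_def)
  have Xe: "X $$ (r, c) = f ((us @ rest) ! r) ((us @ rest) ! c)" if "r < n" "c < n" for r c
    using that by (simp add: X_def mat_on_def n_def)
  have Xsum: "(\<Sum>v\<le>k. X $$ (r, v)) = sum_list (map (f ((us @ rest) ! r)) us)" if "r < n" for r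
  proof -
    have "(\<Sum>v\<le>k. X $$ (r, v)) = (\<Sum>v<length us. f ((us @ rest) ! r) (us ! v))"
      using that len k by (auto simp: Xe nth_append lessThan_Suc_atMost[symmetric] intro!: sum.cong)
    also have "\<dots> = sum_list (map (f ((us @ rest) ! r)) us)"
      by (simp add: sum_list_sum_nth atLeast0LessThan)
    finally show ?thesis .
  qed
  have "det X = det (mat k k (\<lambda>(r, c). X $$ (r, c) - X $$ (k, c))) *
    det (mat (n - k) (n - k) (\<lambda>(r, c).
      if c = 0 then (\<Sum>v\<le>k. X $$ (r + k, v)) else X $$ (r + k, c + k)))"
  proof (rule det_collapse_leading_rows[OF X k])
    show "(\<Sum>v\<le>k. X $$ (r, v)) = (\<Sum>v\<le>k. X $$ (k, v))" if "r < k" for r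
      using that k len by (simp add: Xsum nth_append block_rows)
    show "X $$ (r, c) = X $$ (k, c)" if "r < k" "k < c" "c < n" for r c
      using that len by (simp add: Xe nth_append n_def rows_right)
  qed
  also have "mat k k (\<lambda>(r, c). X $$ (r, c) - X $$ (k, c)) =
      mat_on (butlast us) (\<lambda>u v. f u v - f (last us) v)"
    using len k by (auto simp: Xe nth_append nth_butlast last mat_on_def intro!: eq_matI)
  also have "mat (n - k) (n - k) (\<lambda>(r, c).
      if c = 0 then (\<Sum>v\<le>k. X $$ (r + k, v)) else X $$ (r + k, c + k)) = mat_on (z # rest) f"
  proof (rule eq_matI)
    fix r c assume "r < dim_row (mat_on (z # rest) f)" "c < dim_col (mat_on (z # rest) f)"
    hence r: "r \<le> length rest" and c: "c \<le> length rest" by (auto simp: mat_on_def)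
    have row: "(us @ rest) ! (r + k) = (if r = 0 then us ! k else rest ! (r - 1))"
      and col: "(us @ rest) ! (c + k) = (if c = 0 then us ! k else rest ! (c - 1))"
      using len by (auto simp: nth_append)
    show "mat (n - k) (n - k) (\<lambda>(r, c).
        if c = 0 then (\<Sum>v\<le>k. X $$ (r + k, v)) else X $$ (r + k, c + k)) $$ (r, c) =
      mat_on (z # rest) f $$ (r, c)"
      using r c len Xsum[of "r + k"] Xe[of "r + k" "c + k"]
      by (auto simp: n_def row col mat_on_def nth_Cons' block_rows rows_right cols_below)
  qed (auto simp: n_def len mat_on_def)
  finally show ?thesis by (simp add: X_def)
qed

lemma det_mat_on_collapse_block_div:
  fixes f :: "'p \<Rightarrow> 'p \<Rightarrow> 'a::field"
  assumes "us \<noteq> []"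
    and block_rows: "\<And>u. u \<in> set us \<Longrightarrow> sum_list (map (f u) us) = f z z"
    and rows_right: "\<And>u x. u \<in> set us \<Longrightarrow> x \<in> set rest \<Longrightarrow> f u x = f z x"
    and cols_below: "\<And>x. x \<in> set rest \<Longrightarrow> sum_list (map (f x) us) = f x z"
    and nonzero: "length us \<noteq> 1 \<Longrightarrow> f z z \<noteq> 0"
  shows "det (mat_on (us @ rest) f) =
    (if length us = 1 then 1 else det (mat_on us f) / f z z) * det (mat_on (z # rest) f)"
proof -
  let ?R = "mat_on (butlast us) (\<lambda>u v. f u v - f (last us) v)"
  have full: "det (mat_on (us @ rest) f) = det ?R * det (mat_on (z # rest) f)"
    by (rule det_mat_on_collapse_block[of us f z rest, OF assms(1-4)])
  have "det (mat_on us f) = det ?R * det (mat_on [z] f)"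
    using det_mat_on_collapse_block[of us f z "[]", OF assms(1,2)] by simp
  also have "det (mat_on [z] f) = f z z"
    by (subst det_single) (auto simp: mat_on_def)
  finally have block: "det (mat_on us f) = det ?R * f z z" .
  show ?thesis
  proof (cases "length us = 1")
    case True
    then have "det ?R = 1" by (simp add: mat_on_def)
    then show ?thesis using full True by simp
  next
    case False
    then show ?thesis using full block nonzero by simp
  qed
qed

locale equitable_partition =
  fixes k :: nat and bl :: "nat \<Rightarrow> 'p list" and M :: "'p \<Rightarrow> 'p \<Rightarrow> 'a::field"
    and c :: "nat \<Rightarrow> nat \<Rightarrow> 'a" and s :: "nat \<Rightarrow> 'a"
  assumes nonempty: "\<And>i. i < k \<Longrightarrow> bl i \<noteq> []"
    and disjoint: "\<And>i j. i < k \<Longrightarrow> j < k \<Longrightarrow> i \<noteq> j \<Longrightarrow> set (bl i) \<inter> set (bl j) = {}"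
    and row_sums: "\<And>i u. i < k \<Longrightarrow> u \<in> set (bl i) \<Longrightarrow> sum_list (map (M u) (bl i)) = s i"
    and off_diag: "\<And>i j u v. i < k \<Longrightarrow> j < k \<Longrightarrow> i \<noteq> j \<Longrightarrow> u \<in> set (bl i) \<Longrightarrow> v \<in> set (bl j) \<Longrightarrow>
      M u v = c i j"
begin

definition block_of :: "'p \<Rightarrow> nat" where
  "block_of u = (SOME i. i < k \<and> u \<in> set (bl i))"

lemma block_of: "i < k \<Longrightarrow> u \<in> set (bl i) \<Longrightarrow> block_of u = i"
  unfolding block_of_def by (rule some_equality) (use disjoint in auto)

text \<open>\<open>Inl u\<close> is an index of \<open>M\<close>, \<open>Inr i\<close> stands for the \<open>i\<close>-th block collapsed to a
  single index; the \<open>Inr\<close>-\<open>Inr\<close> entries form the quotient matrix.\<close>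

fun collapsed_entry :: "'p + nat \<Rightarrow> 'p + nat \<Rightarrow> 'a" where
  "collapsed_entry (Inl u) (Inl v) = M u v"
| "collapsed_entry (Inl u) (Inr j) = c (block_of u) j * of_nat (length (bl j))"
| "collapsed_entry (Inr i) (Inl v) = c i (block_of v)"
| "collapsed_entry (Inr i) (Inr j) = (if i = j then s i else c i j * of_nat (length (bl j)))"

lemma det_collapse_block_step:
  assumes q: "q < k" and nonzero: "length (bl q) \<noteq> 1 \<Longrightarrow> s q \<noteq> 0"
    and rest: "\<And>x. x \<in> set rest \<Longrightarrow>
      (\<exists>j v. j < k \<and> j \<noteq> q \<and> v \<in> set (bl j) \<and> x = Inl v) \<or> (\<exists>j<k. j \<noteq> q \<and> x = Inr j)"
  shows "det (mat_on (map Inl (bl q) @ rest) collapsed_entry) =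
    (if length (bl q) = 1 then 1 else det (mat_on (bl q) M) / s q) * det (mat_on (Inr q # rest) collapsed_entry)"
proof -
  let ?f = collapsed_entry
  have block: "map Inl (bl q) \<noteq> []" using nonempty q by simp
  have block_rows: "sum_list (map (?f u) (map Inl (bl q))) = ?f (Inr q) (Inr q)"
    if "u \<in> set (map Inl (bl q))" for u
    using that q by (auto simp: comp_def row_sums)
  have rows_right: "?f u x = ?f (Inr q) x" if "u \<in> set (map Inl (bl q))" "x \<in> set rest" for u x
    using that rest[OF that(2)] q by (auto simp: block_of off_diag)
  have cols_below: "sum_list (map (?f x) (map Inl (bl q))) = ?f x (Inr q)" if x: "x \<in> set rest" for x
  proof -
    obtain a where a: "\<And>u. u \<in> set (bl q) \<Longrightarrow> ?f x (Inl u) = a"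
      and xq: "?f x (Inr q) = a * of_nat (length (bl q))"
    proof -
      from rest[OF x] show thesis
      proof (elim disjE exE conjE)
        fix j v assume "j < k" "j \<noteq> q" "v \<in> set (bl j)" "x = Inl v"
        then show thesis using that[of "c j q"] q by (simp add: block_of off_diag[of j q v])
      next
        fix j assume "j < k" "j \<noteq> q" "x = Inr j"
        then show thesis using that[of "c j q"] q by (simp add: block_of)
      qed
    qed
    have "sum_list (map (?f x) (map Inl (bl q))) = sum_list (map (\<lambda>_. a) (bl q))"
      using a by (simp add: comp_def cong: map_cong)
    also have "\<dots> = ?f x (Inr q)"
      using xq by (simp add: sum_list_triv mult.commute)
    finally show ?thesis .
  qed
  show ?thesis
    using det_mat_on_collapse_block_div[of "map Inl (bl q)" ?f "Inr q" rest,
        OF block block_rows rows_right cols_below]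
    by (simp add: mat_on_map nonzero)
qed

lemma det_collapse_blocks:
  assumes nonzero: "\<And>i. i < k \<Longrightarrow> length (bl i) \<noteq> 1 \<Longrightarrow> s i \<noteq> 0"
  shows "q \<le> k \<Longrightarrow>
    det (mat_on (concat (map (\<lambda>i. map Inl (bl i)) [q..<k]) @ map Inr [0..<q]) collapsed_entry) =
    (\<Prod>i\<in>{q..<k}. if length (bl i) = 1 then 1 else det (mat_on (bl i) M) / s i) *
    det (mat_on (map Inr [0..<k]) collapsed_entry)"
proof (induction "k - q" arbitrary: q)
  case 0
  then show ?case by simp
next
  case (Suc d)
  hence q: "q < k" by simp
  define rest where "rest = concat (map (\<lambda>i. map Inl (bl i)) [Suc q..<k]) @ map Inr [0..<q]"
  have "det (mat_on (map Inl (bl q) @ rest) collapsed_entry) =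
      (if length (bl q) = 1 then 1 else det (mat_on (bl q) M) / s q) *
      det (mat_on (Inr q # rest) collapsed_entry)"
    using q nonzero[OF q] by (intro det_collapse_block_step) (auto simp: rest_def)
  also have "det (mat_on (Inr q # rest) collapsed_entry) = det (mat_on (rest @ [Inr q]) collapsed_entry)"
    by (rule det_mat_on_mset_eq) simp
  also have "rest @ [Inr q] = concat (map (\<lambda>i. map Inl (bl i)) [Suc q..<k]) @ map Inr [0..<Suc q]"
    by (simp add: rest_def)
  also have "det (mat_on \<dots> collapsed_entry) =
      (\<Prod>i\<in>{Suc q..<k}. if length (bl i) = 1 then 1 else det (mat_on (bl i) M) / s i) *
      det (mat_on (map Inr [0..<k]) collapsed_entry)"
    using Suc q by (intro Suc.hyps) auto
  finally show ?case
    using q by (simp add: rest_def upt_conv_Cons prod.atLeast_Suc_lessThan)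
qed

text \<open>A singleton block contributes the factor 1 and needs no assumption on its row sum.\<close>

lemma det_eq_prod_blocks_quotient:
  assumes nonzero: "\<And>i. i < k \<Longrightarrow> length (bl i) \<noteq> 1 \<Longrightarrow> s i \<noteq> 0"
  shows "det (mat_on (concat (map bl [0..<k])) M) =
    (\<Prod>i<k. if length (bl i) = 1 then 1 else det (mat_on (bl i) M) / s i) *
    det (mat k k (\<lambda>(i, j). if i = j then s i else c i j * of_nat (length (bl j))))"
proof -
  have "det (mat_on (concat (map (\<lambda>i. map Inl (bl i)) [0..<k]) @ map Inr [0..<0]) collapsed_entry) =
      (\<Prod>i\<in>{0..<k}. if length (bl i) = 1 then 1 else det (mat_on (bl i) M) / s i) *
      det (mat_on (map Inr [0..<k]) collapsed_entry)"
    by (rule det_collapse_blocks[OF nonzero]) auto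
  also have "concat (map (\<lambda>i. map Inl (bl i)) [0..<k]) @ map Inr [0..<0] =
      map Inl (concat (map bl [0..<k]))"
    by (simp add: map_concat comp_def)
  also have "mat_on (map Inr [0..<k]) collapsed_entry =
      mat k k (\<lambda>(i, j). if i = j then s i else c i j * of_nat (length (bl j)))"
    by (auto simp: mat_on_def intro!: eq_matI)
  finally show ?thesis
    by (simp add: mat_on_map atLeast0LessThan)
qed

end

section \<open>Paths in Schroeder trees\<close>

lemma leaves_nonempty: "wf_conn T \<Longrightarrow> leaves T \<noteq> []"
proof (induction T)
  case (Node E ts)
  then obtain c cs where "ts = c # cs" by (cases ts) auto
  with Node show ?case by simp
qed simp

lemma length_leaves_Node_ge2:
  assumes "wf_conn (Node E ts)"
  shows "2 \<le> length (leaves (Node E ts))"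
proof -
  obtain a b cs where ts: "ts = a # b # cs"
    using assms by (cases ts; cases "tl ts") auto
  have "leaves a \<noteq> []" "leaves b \<noteq> []"
    using assms ts leaves_nonempty by auto
  thus ?thesis using ts by (cases "leaves a"; cases "leaves b") auto
qed

lemma internal_Leaf [simp]: "internal (Leaf a) = {}"
proof -
  have "subt (Leaf a) p \<noteq> Some (Node E ts)" for p E ts by (cases p) auto
  thus ?thesis by (auto simp: internal_def)
qed

lemma internal_Node: "internal (Node E ts) = insert [] (\<Union>i<length ts. (Cons i) ` internal (ts ! i))"
proof (rule Set.set_eqI)
  fix p show "p \<in> internal (Node E ts) \<longleftrightarrow> p \<in> insert [] (\<Union>i<length ts. (Cons i) ` internal (ts ! i))"
    by (cases p) (auto simp: internal_def image_iff)
qed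

lemma finite_internal: "finite (internal T)"
  by (induction T) (auto simp: internal_Node)

lemma phi_at_Cons: "i < length ts \<Longrightarrow> phi_at (Node E ts) (i # p) x t = phi_at (ts ! i) p x t"
  by (simp add: phi_at_def)

lemma rw_Cons: "i < length ts \<Longrightarrow> rw (Node E ts) (i # p) = rw (ts ! i) p"
  by (simp add: rw_def)

lemma Nw_Cons:
  assumes "i < length ts" and "p \<noteq> []"
  shows "Nw (Node E ts) (i # p) = Nw (ts ! i) p"
proof -
  have last: "last (i # p) = last p" and butlast: "butlast (i # p) = i # butlast p"
    using assms(2) by simp_all
  show ?thesis
    unfolding Nw_def last butlast using assms(1) by simp
qed

lemma Nrw_Nil [simp]: "Nrw T [] = 0"
  by (simp add: Nrw_def)

lemma Nrw_Cons:
  assumes i: "i < length ts"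
  shows "Nrw (Node E ts) (i # p) = Nchild E ts i + Nrw (ts ! i) p"
proof -
  have "Nrw (Node E ts) (i # p) = (\<Sum>k = 1..Suc (length p). Nw (Node E ts) (take k (i # p)))"
    by (simp add: Nrw_def)
  also have "\<dots> = Nw (Node E ts) [i] + (\<Sum>k = Suc 1..Suc (length p). Nw (Node E ts) (take k (i # p)))"
    by (subst sum.atLeast_Suc_atMost) simp_all
  also have "(\<Sum>k = Suc 1..Suc (length p). Nw (Node E ts) (take k (i # p))) =
      (\<Sum>k = 1..length p. Nw (Node E ts) (take (Suc k) (i # p)))"
    by (rule sum.shift_bounds_cl_Suc_ivl)
  also have "\<dots> = (\<Sum>k = 1..length p. Nw (ts ! i) (take k p))"
  proof (intro sum.cong refl)
    fix k assume "k \<in> {1..length p}"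
    hence "take k p \<noteq> []" by (cases p) auto
    thus "Nw (Node E ts) (take (Suc k) (i # p)) = Nw (ts ! i) (take k p)"
      using Nw_Cons[OF i] by simp
  qed
  finally show ?thesis
    by (simp add: Nrw_def Nw_def)
qed

lemma internal_Cons_iff: "i < length ts \<Longrightarrow> i # p \<in> internal (Node E ts) \<longleftrightarrow> p \<in> internal (ts ! i)"
  by (simp add: internal_def)

lemma strict_subtrees_child:
  assumes "\<forall>p\<in>internal (Node E ts). p \<noteq> [] \<longrightarrow> P (the (subt (Node E ts) p))" and i: "i < length ts"
  shows "\<forall>p\<in>internal (ts ! i). P (the (subt (ts ! i) p))"
proof
  fix p assume "p \<in> internal (ts ! i)"
  then have "i # p \<in> internal (Node E ts)" using internal_Cons_iff[OF i] by blast
  then show "P (the (subt (ts ! i) p))" using assms by auto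
qed

section \<open>The composed graph at an internal vertex\<close>

lemma distinct_concat_nth_disjoint:
  assumes "distinct (concat xs)" and "i < length xs" "j < length xs" "i \<noteq> j"
  shows "set (xs ! i) \<inter> set (xs ! j) = {}"
proof -
  have "set (xs ! i) \<inter> set (xs ! j) = {}" if ij: "i < j" "j < length xs" for i j
  proof -
    have "distinct (concat (take j xs) @ concat (drop j xs))"
      using assms(1) by (simp flip: concat_append)
    hence "set (concat (take j xs)) \<inter> set (concat (drop j xs)) = {}"
      by simp
    moreover have "xs ! i \<in> set (take j xs)" and "xs ! j \<in> set (drop j xs)"
      using ij by (auto simp: in_set_conv_nth intro: exI[of _ i] exI[of _ 0])
    ultimately show ?thesis by auto
  qed
  thus ?thesis using assms(2-4) by (metis Int_commute linorder_neqE_nat)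
qed

lemma compose_subset_leaves: "e \<in> compose T \<Longrightarrow> e \<subseteq> set (leaves T)"
proof (induction T arbitrary: e)
  case (Node E ts)
  then show ?case by (fastforce simp: in_set_conv_nth)
qed simp

locale composed_node =
  fixes E :: "nat set set" and ts :: "'a::linorder stree list"
  assumes wf: "wf_conn (Node E ts)" and distinct_leaves: "distinct (leaves (Node E ts))"
begin

lemma loopless: "{i} \<notin> E"
  using wf by (auto simp: simple_graph_def doubleton_eq_iff)

lemma wf_child: "i < length ts \<Longrightarrow> wf_conn (ts ! i)"
  using wf by (simp add: list_all_iff)

lemma leaves_child_nonempty: "c \<in> set ts \<Longrightarrow> leaves c \<noteq> []"
  using wf leaves_nonempty by (auto simp: list_all_iff)

lemma distinct_leaves_child: "i < length ts \<Longrightarrow> distinct (leaves (ts ! i))"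
  using distinct_leaves by (simp add: distinct_concat_iff)

lemma leaves_children_disjoint:
  "i < length ts \<Longrightarrow> j < length ts \<Longrightarrow> i \<noteq> j \<Longrightarrow> set (leaves (ts ! i)) \<inter> set (leaves (ts ! j)) = {}"
  using distinct_concat_nth_disjoint[of "map leaves ts" i j] distinct_leaves by simp

lemma child_unique:
  "a < length ts \<Longrightarrow> b < length ts \<Longrightarrow> w \<in> set (leaves (ts ! a)) \<Longrightarrow> w \<in> set (leaves (ts ! b)) \<Longrightarrow> a = b"
  using leaves_children_disjoint by blast

lemma edge_compose_iff:
  assumes i: "i < length ts" and j: "j < length ts"
    and u: "u \<in> set (leaves (ts ! i))" and v: "v \<in> set (leaves (ts ! j))"
  shows "{u, v} \<in> compose (Node E ts) \<longleftrightarrow> (if i = j then {u, v} \<in> compose (ts ! i) else {i, j} \<in> E)"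
proof
  assume "{u, v} \<in> compose (Node E ts)"
  then consider (inner) l where "l < length ts" "{u, v} \<in> compose (ts ! l)"
    | (cross) x y a b where "{u, v} = {x, y}" "{a, b} \<in> E" "a < length ts" "b < length ts"
        "x \<in> set (leaves (ts ! a))" "y \<in> set (leaves (ts ! b))"
    by (auto simp: in_set_conv_nth[of _ ts])
  then show "if i = j then {u, v} \<in> compose (ts ! i) else {i, j} \<in> E"
  proof cases
    case inner
    with compose_subset_leaves have "u \<in> set (leaves (ts ! l))" "v \<in> set (leaves (ts ! l))"
      by blast+
    with inner child_unique i j u v have "l = i" "l = j" by blast+
    with inner show ?thesis by simp
  next
    case cross
    have "{i, j} = {a, b}"
      using cross(1) child_unique[OF i cross(3) u] child_unique[OF i cross(4) u]
        child_unique[OF j cross(3) v] child_unique[OF j cross(4) v] cross(5,6)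
      by (auto simp: doubleton_eq_iff)
    then show ?thesis using cross(2) loopless by auto
  qed
next
  assume "if i = j then {u, v} \<in> compose (ts ! i) else {i, j} \<in> E"
  then show "{u, v} \<in> compose (Node E ts)"
    using i j u v by (auto split: if_splits)
qed

lemma neighbours_compose:
  assumes i: "i < length ts" and u: "u \<in> set (leaves (ts ! i))"
  shows "{w. {w, u} \<in> compose (Node E ts)} =
    {w. {w, u} \<in> compose (ts ! i)} \<union> (\<Union>j\<in>{j. j < length ts \<and> {j, i} \<in> E}. set (leaves (ts ! j)))"
proof (rule Set.set_eqI)
  fix w
  show "w \<in> {w. {w, u} \<in> compose (Node E ts)} \<longleftrightarrow>
    w \<in> {w. {w, u} \<in> compose (ts ! i)} \<union> (\<Union>j\<in>{j. j < length ts \<and> {j, i} \<in> E}. set (leaves (ts ! j)))"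
  proof (cases "\<exists>j<length ts. w \<in> set (leaves (ts ! j))")
    case True
    then obtain j where j: "j < length ts" "w \<in> set (leaves (ts ! j))" by blast
    have iff: "{w, u} \<in> compose (Node E ts) \<longleftrightarrow> (if j = i then {w, u} \<in> compose (ts ! i) else {j, i} \<in> E)"
      using edge_compose_iff[OF j(1) i j(2) u] by simp
    have union: "w \<in> (\<Union>j\<in>{j. j < length ts \<and> {j, i} \<in> E}. set (leaves (ts ! j))) \<longleftrightarrow> {j, i} \<in> E"
      using child_unique[OF j(1) _ j(2)] j by blast
    have "j = i" if "{w, u} \<in> compose (ts ! i)"
      using compose_subset_leaves[OF that] child_unique[OF i j(1) _ j(2)] by blast
    then show ?thesis
      unfolding Un_iff mem_Collect_eq iff union using loopless by auto
  next
    case False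
    hence "w \<notin> set (leaves (Node E ts))"
      by (auto simp: in_set_conv_nth[of _ ts])
    hence "{w, u} \<notin> compose (Node E ts)"
      using compose_subset_leaves by blast
    moreover have "{w, u} \<notin> compose (ts ! i)"
      using compose_subset_leaves False i by blast
    ultimately show ?thesis
      using False by blast
  qed
qed

lemma deg_compose:
  assumes i: "i < length ts" and u: "u \<in> set (leaves (ts ! i))"
  shows "deg (compose (Node E ts)) u = deg (compose (ts ! i)) u + Nchild E ts i"
proof -
  define J where "J = {j. j < length ts \<and> {j, i} \<in> E}"
  have inner: "{w. {w, u} \<in> compose (ts ! i)} \<subseteq> set (leaves (ts ! i))"
    using compose_subset_leaves by blast
  have "i \<notin> J"
    using loopless by (simp add: J_def)
  hence disjoint: "{w. {w, u} \<in> compose (ts ! i)} \<inter> (\<Union>j\<in>J. set (leaves (ts ! j))) = {}"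
    using inner leaves_children_disjoint[OF i] by (fastforce simp: J_def)
  have "card (\<Union>j\<in>J. set (leaves (ts ! j))) = (\<Sum>j\<in>J. card (set (leaves (ts ! j))))"
    using leaves_children_disjoint by (intro card_UN_disjoint) (auto simp: J_def)
  also have "\<dots> = Nchild E ts i"
    using distinct_leaves_child by (simp add: Nchild_def J_def distinct_card)
  finally have "card (\<Union>j\<in>J. set (leaves (ts ! j))) = Nchild E ts i" .
  moreover have "finite (\<Union>j\<in>J. set (leaves (ts ! j)))"
    by (simp add: J_def)
  ultimately show ?thesis
    unfolding deg_def neighbours_compose[OF i u] J_def[symmetric]
    using disjoint finite_subset[OF inner] by (simp add: card_Un_disjoint)
qed

end

section \<open>One level of the factorization\<close>

definition phi_entry :: "'v set set \<Rightarrow> real \<Rightarrow> real \<Rightarrow> 'v \<Rightarrow> 'v \<Rightarrow> real" where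
  "phi_entry Ed x t u v = (if u = v then x + t * real (deg Ed u) else 0) - (if {u, v} \<in> Ed then 1 else 0)"

lemma phi_graph_eq_det_mat_on:
  fixes vs :: "'v::linorder list"
  assumes "distinct vs"
  shows "phi_graph (set vs) Ed x t = det (mat_on vs (phi_entry Ed x t))"
proof -
  let ?ws = "sorted_list_of_set (set vs)"
  have "phi_graph (set vs) Ed x t = det (mat_on ?ws (phi_entry Ed x t))"
    unfolding phi_graph_def Let_def
    by (rule arg_cong[where f = det])
      (auto simp: mat_on_def phi_entry_def nth_eq_iff_index_eq intro!: eq_matI)
  also have "\<dots> = det (mat_on vs (phi_entry Ed x t))"
    by (rule det_mat_on_mset_eq) (simp add: assms sorted_list_of_set_sort_remdups distinct_remdups_id)
  finally show ?thesis .
qed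

lemma sum_list_phi_entry_row:
  assumes d: "distinct vs" and u: "u \<in> set vs" and edges: "\<And>e. e \<in> Ed \<Longrightarrow> e \<subseteq> set vs"
  shows "sum_list (map (phi_entry Ed x t u) vs) = x + t * real (deg Ed u) - real (deg Ed u)"
proof -
  have "sum_list (map (phi_entry Ed x t u) vs) =
      (\<Sum>v\<in>set vs. if u = v then x + t * real (deg Ed u) else 0) - (\<Sum>v\<in>set vs. if {u, v} \<in> Ed then 1 else 0)"
    using d by (simp add: sum_list_distinct_conv_sum_set phi_entry_def sum_subtractf)
  also have "(\<Sum>v\<in>set vs. if {u, v} \<in> Ed then 1 else 0) = real (card {v \<in> set vs. {u, v} \<in> Ed})"
    by (simp flip: sum.inter_filter)
  also have "{v \<in> set vs. {u, v} \<in> Ed} = {v. {v, u} \<in> Ed}"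
    using edges by (auto simp: insert_commute)
  finally show ?thesis
    using u by (simp add: deg_def)
qed

lemma phi_node_eq_det_quotient:
  assumes "\<And>c. c \<in> set ts \<Longrightarrow> leaves c \<noteq> []"
  shows "phi_node E ts y t = det (mat (length ts) (length ts) (\<lambda>(i, j).
    if i = j then y + t * real (Nchild E ts i) - real (treg (ts ! i)) + t * real (treg (ts ! i))
    else - (if {i, j} \<in> E then 1 else 0) * of_nat (length (leaves (ts ! j)))))"
    (is "_ = det ?Q")
proof -
  let ?k = "length ts"
  define a where "a i = sqrt (real (length (leaves (ts ! i))))" for i
  have a: "a i \<noteq> 0" if "i < ?k" for i
    using assms[of "ts ! i"] that by (simp add: a_def)
  have scale: "a i * (c * real (length (leaves (ts ! j)))) / a j =
      c * sqrt (real (length (leaves (ts ! i))) * real (length (leaves (ts ! j))))" for i j c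
  proof -
    have "real (length (leaves (ts ! j))) / a j = a j"
      unfolding a_def by (rule real_div_sqrt) simp
    then show ?thesis
      by (simp add: a_def real_sqrt_mult flip: times_divide_eq_right)
  qed
  have "y \<cdot>\<^sub>m 1\<^sub>m ?k - (node_A E ts - t \<cdot>\<^sub>m node_D E ts) = mat ?k ?k (\<lambda>(i, j). a i * ?Q $$ (i, j) / a j)"
  proof (rule eq_matI)
    fix i j assume "i < dim_row (mat ?k ?k (\<lambda>(i, j). a i * ?Q $$ (i, j) / a j))"
      "j < dim_col (mat ?k ?k (\<lambda>(i, j). a i * ?Q $$ (i, j) / a j))"
    then have i: "i < ?k" and j: "j < ?k" by auto
    show "(y \<cdot>\<^sub>m 1\<^sub>m ?k - (node_A E ts - t \<cdot>\<^sub>m node_D E ts)) $$ (i, j) =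
        mat ?k ?k (\<lambda>(i, j). a i * ?Q $$ (i, j) / a j) $$ (i, j)"
    proof (cases "i = j")
      case True
      have "a i * ?Q $$ (i, i) / a i = ?Q $$ (i, i)"
        using a[OF i] by simp
      then show ?thesis using True i by (simp add: node_A_def node_D_def algebra_simps)
    next
      case False
      then show ?thesis using i j by (simp add: node_A_def node_D_def scale)
    qed
  qed (simp_all add: node_A_def node_D_def)
  then show ?thesis
    unfolding phi_node_def using det_diagonal_similarity[OF mat_carrier a] by simp
qed

context composed_node
begin

lemma phi_entry_inner:
  assumes i: "i < length ts" and u: "u \<in> set (leaves (ts ! i))" and v: "v \<in> set (leaves (ts ! i))"
  shows "phi_entry (compose (Node E ts)) y t u v =
    phi_entry (compose (ts ! i)) (y + t * real (Nchild E ts i)) t u v"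
  unfolding phi_entry_def edge_compose_iff[OF i i u v] deg_compose[OF i u]
  by (simp add: algebra_simps)

lemma phi_entry_cross:
  assumes i: "i < length ts" and j: "j < length ts" and "i \<noteq> j"
    and u: "u \<in> set (leaves (ts ! i))" and v: "v \<in> set (leaves (ts ! j))"
  shows "phi_entry (compose (Node E ts)) y t u v = - (if {i, j} \<in> E then 1 else 0)"
proof -
  have "u \<noteq> v"
    using leaves_children_disjoint[OF i j \<open>i \<noteq> j\<close>] u v by blast
  then show ?thesis
    using edge_compose_iff[OF i j u v] \<open>i \<noteq> j\<close> by (simp add: phi_entry_def)
qed

lemma row_sum_phi_entry:
  assumes i: "i < length ts" and u: "u \<in> set (leaves (ts ! i))"
    and regular: "deg (compose (ts ! i)) u = treg (ts ! i)"
  shows "sum_list (map (phi_entry (compose (Node E ts)) y t u) (leaves (ts ! i))) =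
    y + t * real (Nchild E ts i) - real (treg (ts ! i)) + t * real (treg (ts ! i))"
proof -
  let ?y = "y + t * real (Nchild E ts i)" and ?r = "real (deg (compose (ts ! i)) u)"
  have "sum_list (map (phi_entry (compose (Node E ts)) y t u) (leaves (ts ! i))) =
      sum_list (map (phi_entry (compose (ts ! i)) ?y t u) (leaves (ts ! i)))"
    using phi_entry_inner[OF i u] by (intro arg_cong[where f = sum_list] map_cong) auto
  also have "\<dots> = ?y + t * ?r - ?r"
    by (rule sum_list_phi_entry_row[OF distinct_leaves_child[OF i] u compose_subset_leaves])
  finally show ?thesis
    using regular by (simp add: algebra_simps)
qed

lemma equitable_partition_phi_entry:
  assumes regular: "\<And>i u. i < length ts \<Longrightarrow> u \<in> set (leaves (ts ! i)) \<Longrightarrow>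
      deg (compose (ts ! i)) u = treg (ts ! i)"
  shows "equitable_partition (length ts) (\<lambda>i. leaves (ts ! i)) (phi_entry (compose (Node E ts)) y t)
    (\<lambda>i j. - (if {i, j} \<in> E then 1 else 0))
    (\<lambda>i. y + t * real (Nchild E ts i) - real (treg (ts ! i)) + t * real (treg (ts ! i)))"
proof
  show "leaves (ts ! i) \<noteq> []" if "i < length ts" for i
    using leaves_child_nonempty that by simp
  show "set (leaves (ts ! i)) \<inter> set (leaves (ts ! j)) = {}"
    if "i < length ts" "j < length ts" "i \<noteq> j" for i j
    by (rule leaves_children_disjoint[OF that])
qed (use row_sum_phi_entry regular phi_entry_cross in auto)

lemma det_mat_on_child:
  assumes i: "i < length ts"
  shows "det (mat_on (leaves (ts ! i)) (phi_entry (compose (Node E ts)) y t)) =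
    phi_graph (set (leaves (ts ! i))) (compose (ts ! i)) (y + t * real (Nchild E ts i)) t"
proof -
  have "mat_on (leaves (ts ! i)) (phi_entry (compose (Node E ts)) y t) =
      mat_on (leaves (ts ! i)) (phi_entry (compose (ts ! i)) (y + t * real (Nchild E ts i)) t)"
    by (rule mat_on_cong) (rule phi_entry_inner[OF i])
  then show ?thesis
    by (simp add: phi_graph_eq_det_mat_on[OF distinct_leaves_child[OF i]])
qed

lemma phi_graph_factor:
  assumes regular: "\<And>i u. i < length ts \<Longrightarrow> u \<in> set (leaves (ts ! i)) \<Longrightarrow>
      deg (compose (ts ! i)) u = treg (ts ! i)"
    and nonzero: "\<And>i. i < length ts \<Longrightarrow> length (leaves (ts ! i)) \<noteq> 1 \<Longrightarrow>
      y + t * real (Nchild E ts i) - real (treg (ts ! i)) + t * real (treg (ts ! i)) \<noteq> 0"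
  shows "phi_graph (set (leaves (Node E ts))) (compose (Node E ts)) y t =
    (\<Prod>i<length ts. if length (leaves (ts ! i)) = 1 then 1 else
       phi_graph (set (leaves (ts ! i))) (compose (ts ! i)) (y + t * real (Nchild E ts i)) t /
       (y + t * real (Nchild E ts i) - real (treg (ts ! i)) + t * real (treg (ts ! i)))) *
    phi_node E ts y t"
proof -
  let ?M = "phi_entry (compose (Node E ts)) y t"
  let ?s = "\<lambda>i. y + t * real (Nchild E ts i) - real (treg (ts ! i)) + t * real (treg (ts ! i))"
  let ?c = "\<lambda>i j. - (if {i, j} \<in> E then 1 else 0) :: real"
  interpret P: equitable_partition "length ts" "\<lambda>i. leaves (ts ! i)" ?M ?c ?s
    by (rule equitable_partition_phi_entry[OF regular])
  have "leaves (Node E ts) = concat (map (\<lambda>i. leaves (ts ! i)) [0..<length ts])"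
    by (simp add: map_nth[of ts, symmetric, THEN arg_cong[where f = "map leaves"]] comp_def)
  then have "phi_graph (set (leaves (Node E ts))) (compose (Node E ts)) y t =
      det (mat_on (concat (map (\<lambda>i. leaves (ts ! i)) [0..<length ts])) ?M)"
    using phi_graph_eq_det_mat_on[OF distinct_leaves] by simp
  also have "\<dots> = (\<Prod>i<length ts. if length (leaves (ts ! i)) = 1 then 1
        else det (mat_on (leaves (ts ! i)) ?M) / ?s i) *
      det (mat (length ts) (length ts) (\<lambda>(i, j).
        if i = j then ?s i else ?c i j * of_nat (length (leaves (ts ! j)))))"
    by (rule P.det_eq_prod_blocks_quotient[OF nonzero])
  also have "det (mat (length ts) (length ts) (\<lambda>(i, j).
      if i = j then ?s i else ?c i j * of_nat (length (leaves (ts ! j))))) = phi_node E ts y t"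
    using phi_node_eq_det_quotient[OF leaves_child_nonempty] by simp
  also have "(\<Prod>i<length ts. if length (leaves (ts ! i)) = 1 then 1
        else det (mat_on (leaves (ts ! i)) ?M) / ?s i) =
      (\<Prod>i<length ts. if length (leaves (ts ! i)) = 1 then 1 else
        phi_graph (set (leaves (ts ! i))) (compose (ts ! i)) (y + t * real (Nchild E ts i)) t / ?s i)"
    by (intro prod.cong refl) (simp add: det_mat_on_child del: compose.simps)
  finally show ?thesis .
qed

end

section \<open>Induction over the tree\<close>

lemma reg_eqI: "V \<noteq> {} \<Longrightarrow> regular V Ed r \<Longrightarrow> reg V Ed = r"
  unfolding reg_def by (rule the_equality) (auto simp: regular_def)

lemma treg_Leaf [simp]: "treg (Leaf a) = 0"
  unfolding treg_def by (rule reg_eqI) (auto simp: regular_def deg_def)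

lemma deg_compose_eq_treg:
  assumes "\<forall>p\<in>internal T. \<exists>r. regular (set (leaves (the (subt T p)))) (compose (the (subt T p))) r"
    and u: "u \<in> set (leaves T)"
  shows "deg (compose T) u = treg T"
proof (cases T)
  case (Leaf a)
  then show ?thesis by (simp add: deg_def)
next
  case (Node E ts)
  then have "[] \<in> internal T" by (simp add: internal_def)
  then obtain r where r: "regular (set (leaves T)) (compose T) r"
    using assms(1) by fastforce
  then have "treg T = r"
    unfolding treg_def using u by (intro reg_eqI) auto
  with r u show ?thesis by (simp add: regular_def)
qed

definition vertex_divisor :: "'a stree \<Rightarrow> real \<Rightarrow> real \<Rightarrow> nat list \<Rightarrow> real" where
  "vertex_divisor T x t p = x - real (rw T p) + t * (real (rw T p) + real (Nrw T p))"

definition vertex_factor :: "'a stree \<Rightarrow> real \<Rightarrow> real \<Rightarrow> nat list \<Rightarrow> real" where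
  "vertex_factor T x t p = phi_at T p (x + t * real (Nrw T p)) t / vertex_divisor T x t p"

lemma vertex_divisor_Cons:
  "i < length ts \<Longrightarrow>
    vertex_divisor (Node E ts) x t (i # p) = vertex_divisor (ts ! i) (x + t * real (Nchild E ts i)) t p"
  by (simp add: vertex_divisor_def rw_Cons Nrw_Cons algebra_simps)

lemma vertex_divisor_Nil: "vertex_divisor T x t [] = x - real (treg T) + t * real (treg T)"
  by (simp add: vertex_divisor_def rw_def)

lemma vertex_factor_Cons:
  "i < length ts \<Longrightarrow>
    vertex_factor (Node E ts) x t (i # p) = vertex_factor (ts ! i) (x + t * real (Nchild E ts i)) t p"
  by (simp add: vertex_factor_def vertex_divisor_Cons phi_at_Cons Nrw_Cons algebra_simps)

lemma prod_vertex_factor_Node: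
  "(\<Prod>p\<in>internal (Node E ts) - {[]}. vertex_factor (Node E ts) x t p) =
    (\<Prod>i<length ts. \<Prod>p\<in>internal (ts ! i). vertex_factor (ts ! i) (x + t * real (Nchild E ts i)) t p)"
proof -
  have "internal (Node E ts) - {[]} = (\<Union>i<length ts. (Cons i) ` internal (ts ! i))"
    by (auto simp: internal_Node)
  then have "(\<Prod>p\<in>internal (Node E ts) - {[]}. vertex_factor (Node E ts) x t p) =
      (\<Prod>i<length ts. \<Prod>p\<in>(Cons i) ` internal (ts ! i). vertex_factor (Node E ts) x t p)"
    by (simp only:) (rule prod.UNION_disjoint; auto simp: finite_internal)
  also have "\<dots> = (\<Prod>i<length ts. \<Prod>p\<in>internal (ts ! i). vertex_factor (Node E ts) x t (i # p))"
    by (simp add: prod.reindex)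
  finally show ?thesis
    by (simp add: vertex_factor_Cons)
qed

lemma prod_internal_vertex_factor:
  assumes "[] \<in> internal T"
    and "phi_graph (set (leaves T)) (compose T) x t =
      (\<Prod>p\<in>internal T - {[]}. vertex_factor T x t p) * phi_at T [] x t"
  shows "(\<Prod>p\<in>internal T. vertex_factor T x t p) =
    phi_graph (set (leaves T)) (compose T) x t / vertex_divisor T x t []"
  using assms by (simp add: prod.remove[OF finite_internal] vertex_factor_def)

lemma vertex_divisors_child:
  assumes "\<forall>p\<in>internal (Node E ts). p \<noteq> [] \<longrightarrow> vertex_divisor (Node E ts) x t p \<noteq> 0" and i: "i < length ts"
  shows "\<forall>p\<in>internal (ts ! i). vertex_divisor (ts ! i) (x + t * real (Nchild E ts i)) t p \<noteq> 0"
  using assms internal_Cons_iff[OF i] by (auto simp flip: vertex_divisor_Cons[OF i])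

lemma phi_graph_compose_factorization:
  fixes T :: "'a::linorder stree"
  assumes "[] \<in> internal T" and "wf_conn T" and "distinct (leaves T)"
    and "\<forall>p\<in>internal T. p \<noteq> [] \<longrightarrow>
      (\<exists>r. regular (set (leaves (the (subt T p)))) (compose (the (subt T p))) r)"
    and "\<forall>p\<in>internal T. p \<noteq> [] \<longrightarrow> vertex_divisor T x t p \<noteq> 0"
  shows "phi_graph (set (leaves T)) (compose T) x t =
    (\<Prod>p\<in>internal T - {[]}. vertex_factor T x t p) * phi_at T [] x t"
  using assms
proof (induction T arbitrary: x)
  case (Leaf a)
  then show ?case by simp
next
  case (Node E ts)
  interpret N: composed_node E ts
    using Node.prems(2,3) by unfold_locales
  note IH = Node.IH
  let ?y = "\<lambda>i. x + t * real (Nchild E ts i)"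
  note regular = strict_subtrees_child[OF Node.prems(4)]
    and divisors = vertex_divisors_child[OF Node.prems(5)]
  have child: "(\<Prod>p\<in>internal (ts ! i). vertex_factor (ts ! i) (?y i) t p) =
      (if length (leaves (ts ! i)) = 1 then 1 else
        phi_graph (set (leaves (ts ! i))) (compose (ts ! i)) (?y i) t / vertex_divisor (ts ! i) (?y i) t [])"
    if i: "i < length ts" for i
  proof (cases "ts ! i")
    case (Leaf a)
    then show ?thesis by simp
  next
    case (Node E' ts')
    have root: "[] \<in> internal (ts ! i)" using Node by (simp add: internal_def)
    have "phi_graph (set (leaves (ts ! i))) (compose (ts ! i)) (?y i) t =
        (\<Prod>p\<in>internal (ts ! i) - {[]}. vertex_factor (ts ! i) (?y i) t p) * phi_at (ts ! i) [] (?y i) t"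
      using i root N.wf_child[OF i] N.distinct_leaves_child[OF i] regular[OF i] divisors[OF i]
      by (intro IH) auto
    moreover have "length (leaves (ts ! i)) \<noteq> 1"
      using length_leaves_Node_ge2[of E' ts'] N.wf_child[OF i] Node by simp
    ultimately show ?thesis
      using prod_internal_vertex_factor[OF root] by simp
  qed
  have "phi_graph (set (leaves (Node E ts))) (compose (Node E ts)) x t =
      (\<Prod>i<length ts. if length (leaves (ts ! i)) = 1 then 1 else
        phi_graph (set (leaves (ts ! i))) (compose (ts ! i)) (?y i) t / vertex_divisor (ts ! i) (?y i) t []) *
      phi_node E ts x t"
    unfolding vertex_divisor_Nil
  proof (rule N.phi_graph_factor)
    show "deg (compose (ts ! i)) u = treg (ts ! i)" if "i < length ts" "u \<in> set (leaves (ts ! i))" for i u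
      using deg_compose_eq_treg[OF regular[OF that(1)] that(2)] .
    show "?y i - real (treg (ts ! i)) + t * real (treg (ts ! i)) \<noteq> 0"
      if i: "i < length ts" and "length (leaves (ts ! i)) \<noteq> 1" for i
    proof -
      have "[] \<in> internal (ts ! i)"
        using that by (cases "ts ! i") (auto simp: internal_def)
      then show ?thesis using divisors[OF i] by (auto simp: vertex_divisor_Nil)
    qed
  qed
  also have "(\<Prod>i<length ts. if length (leaves (ts ! i)) = 1 then 1 else
        phi_graph (set (leaves (ts ! i))) (compose (ts ! i)) (?y i) t / vertex_divisor (ts ! i) (?y i) t []) =
      (\<Prod>p\<in>internal (Node E ts) - {[]}. vertex_factor (Node E ts) x t p)"
    unfolding prod_vertex_factor_Node by (rule prod.cong[OF refl]) (simp add: child)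
  also have "phi_node E ts x t = phi_at (Node E ts) [] x t"
    by (simp add: phi_at_def)
  finally show ?case .
qed

theorem mainTheorem10:
  fixes L :: "'a::linorder set" and T :: "'a stree" and x t :: real
  assumes "finite L" and "card L \<ge> 2"
    and "wf_conn T"
    and "leaves T = sorted_list_of_set L"
    and "\<forall>p\<in>internal T. p \<noteq> [] \<longrightarrow>
           (\<exists>r. regular (set (leaves (the (subt T p)))) (compose (the (subt T p))) r)"
    and "\<forall>p\<in>internal T. p \<noteq> [] \<longrightarrow>
           x - real (rw T p) + t * (real (rw T p) + real (Nrw T p)) \<noteq> 0"
  shows "phi_graph L (compose T) x t =
    (\<Prod>p\<in>internal T - {[]}.
        phi_at T p (x + t * real (Nrw T p)) t /
        (x - real (rw T p) + t * (real (rw T p) + real (Nrw T p)))) * phi_at T [] x t"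
proof -
  have leaves: "set (leaves T) = L" and "distinct (leaves T)"
    using assms(1,4) by simp_all
  have "[] \<in> internal T"
  proof (cases T)
    case (Leaf a)
    then have "L = {a}" using leaves by simp
    then show ?thesis using assms(2) by simp
  qed (simp add: internal_def)
  then have "phi_graph (set (leaves T)) (compose T) x t =
      (\<Prod>p\<in>internal T - {[]}. vertex_factor T x t p) * phi_at T [] x t"
    using assms(3,5,6) \<open>distinct (leaves T)\<close>
    by (intro phi_graph_compose_factorization) (simp_all add: vertex_divisor_def)
  then show ?thesis
    using leaves by (simp add: vertex_factor_def vertex_divisor_def)
qed

end
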